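(* Let $\lambda\in\Lambda$ (single-hop). For every $q\in\mathbb R_+^N$, $\Delta(q)$ is the unique optimal solution of the problem: minimize $L(r)$ over $r\in\mathbb R_+^N$ subject to $\xi\cdot r\ge\xi\cdot q$ for all $\xi\in\Xi^+(\lambda)$.
   Context: Single-hop network with $N$ queues and finite $\mathcal S\subset\mathbb R_+^N$; $f:\mathbb R_+\to\mathbb R_+$ differentiable, strictly increasing, $f(0)=0$; $L(q)=\sum_n\int_0^{q_n}f$. $\langle\mathcal S\rangle$ convex hull; $\Lambda=\{\lambda\in\mathbb R_+^N:\lambda\le\sigma$ for some $\sigma\in\langle\mathcal S\rangle\}$. $E$ = set of extreme points of $\{\xi\in\mathbb R_+^N:\max_{\pi\in\mathcal S}\xi\cdot\pi\le1\}$; $\mathcal S^*$ = maximal elements of $E$ (componentwise order); $\Xi(\lambda)=\{\xi\in\mathcal S^*:\xi\cdot\lambda=1\}$; $\Xi^+(\lambda)=\{\xi\in E:\xi\cdot\lambda=1\}$. Lifting map: $\Delta(q)$ is the unique minimizer of $L(r)$ over $r\in\mathbb R_+^N$ s.t. $\xi\cdot r\ge\xi\cdot q$ for all $\xi\in\Xi(\lambda)$ and $r_n\le q_n$ for all $n$ with $\lambda_n=0$. *)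

theory Defs
  imports "HOL-Analysis.Analysis"
begin

text \<open>Vectors in R^N are modelled as real^'n (N = CARD('n)). The componentwise
order is spelled out explicitly.\<close>

definition nonneg_vec :: "real^'n \<Rightarrow> bool" where
  "nonneg_vec x \<longleftrightarrow> (\<forall>i. 0 \<le> x $ i)"

definition vle :: "real^'n \<Rightarrow> real^'n \<Rightarrow> bool" where
  "vle x y \<longleftrightarrow> (\<forall>i. x $ i \<le> y $ i)"

definition Lam :: "(real^'n) set \<Rightarrow> (real^'n) set" where
  "Lam S = {lam. nonneg_vec lam \<and> (\<exists>\<sigma>\<in>convex hull S. vle lam \<sigma>)}"

definition dualpoly :: "(real^'n) set \<Rightarrow> (real^'n) set" where
  "dualpoly S = {\<xi>. nonneg_vec \<xi> \<and> (\<forall>\<pi>\<in>S. \<xi> \<bullet> \<pi> \<le> 1)}"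

definition Eset :: "(real^'n) set \<Rightarrow> (real^'n) set" where
  "Eset S = {\<xi>. \<xi> extreme_point_of dualpoly S}"

definition Sstar :: "(real^'n) set \<Rightarrow> (real^'n) set" where
  "Sstar S = {\<xi>\<in>Eset S. \<not> (\<exists>\<eta>\<in>Eset S. vle \<xi> \<eta> \<and> \<eta> \<noteq> \<xi>)}"

definition Xi :: "(real^'n) set \<Rightarrow> real^'n \<Rightarrow> (real^'n) set" where
  "Xi S lam = {\<xi>\<in>Sstar S. \<xi> \<bullet> lam = 1}"

definition Xi_plus :: "(real^'n) set \<Rightarrow> real^'n \<Rightarrow> (real^'n) set" where
  "Xi_plus S lam = {\<xi>\<in>Eset S. \<xi> \<bullet> lam = 1}"

definition Lyap :: "(real \<Rightarrow> real) \<Rightarrow> real^'n \<Rightarrow> real" where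
  "Lyap f q = (\<Sum>n\<in>UNIV. integral {0..q $ n} f)"

definition lift_feasible :: "(real^'n) set \<Rightarrow> real^'n \<Rightarrow> real^'n \<Rightarrow> real^'n \<Rightarrow> bool" where
  "lift_feasible S lam q r \<longleftrightarrow> nonneg_vec r \<and> (\<forall>\<xi>\<in>Xi S lam. \<xi> \<bullet> r \<ge> \<xi> \<bullet> q)
      \<and> (\<forall>n. lam $ n = 0 \<longrightarrow> r $ n \<le> q $ n)"

definition Delta :: "(real \<Rightarrow> real) \<Rightarrow> (real^'n) set \<Rightarrow> real^'n \<Rightarrow> real^'n \<Rightarrow> real^'n" where
  "Delta f S lam q = (THE r. lift_feasible S lam q r \<and>
      (\<forall>r'. lift_feasible S lam q r' \<longrightarrow> Lyap f r \<le> Lyap f r'))"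

definition plus_feasible :: "(real^'n) set \<Rightarrow> real^'n \<Rightarrow> real^'n \<Rightarrow> real^'n \<Rightarrow> bool" where
  "plus_feasible S lam q r \<longleftrightarrow> nonneg_vec r \<and> (\<forall>\<xi>\<in>Xi_plus S lam. \<xi> \<bullet> r \<ge> \<xi> \<bullet> q)"

definition plus_optimal :: "(real \<Rightarrow> real) \<Rightarrow> (real^'n) set \<Rightarrow> real^'n \<Rightarrow> real^'n \<Rightarrow> real^'n \<Rightarrow> bool" where
  "plus_optimal f S lam q r \<longleftrightarrow> plus_feasible S lam q r \<and>
      (\<forall>r'. plus_feasible S lam q r' \<longrightarrow> Lyap f r \<le> Lyap f r')"

end

theory Submission
  imports Defs
begin

(* L(r) = sum_n F(r_n) with F the primitive of f; F is strictly
      midpoint convex and coercive, so L has exactly one minimiser on every closed convex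
      set of nonnegative vectors that is nonempty.
   2. Polyhedral facts.  After discarding the coordinates on which all schedules vanish,
      the dual polyhedron becomes a compact polytope with the same extreme points E; by
      Krein-Milman every point eta of it with eta.lam = 1 is a convex combination of points
      of Xi+(lam), so it inherits their constraints.  Moreover every element of Xi+(lam) is
      dominated componentwise by an element of Xi(lam).
   3. Comparison of the two problems.  Every lift-feasible r is plus-feasible; conversely
      clipping r_n down to q_n on the zero coordinates of lam maps plus-feasible points to
      lift-feasible points without increasing L.  Hence the unique plus-optimum is
      lift-feasible, so it is the lift-optimum Delta(q). *)

section \<open>The Lyapunov function of an increasing rate function\<close>

text \<open>The hypotheses on f needed below: continuity, strict monotonicity and f 0 = 0
  on the half line.  (Differentiability, as assumed in the paper, implies continuity.)\<close>

locale increasing_rate =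
  fixes f :: "real \<Rightarrow> real"
  assumes f_cont: "continuous_on {0..} f"
    and f_strict_mono: "strict_mono_on {0..} f"
    and f_zero: "f 0 = 0"
begin

lemma f_integrable: "0 \<le> a \<Longrightarrow> f integrable_on {a..b}"
  by (rule integrable_continuous_real, rule continuous_on_subset[OF f_cont]) auto

lemma f_le: "0 \<le> x \<Longrightarrow> x \<le> y \<Longrightarrow> f x \<le> f y"
  using f_strict_mono by (metis atLeast_iff order_le_less order_trans strict_mono_onD)

lemma f_less: "0 \<le> x \<Longrightarrow> x < y \<Longrightarrow> f x < f y"
  using f_strict_mono by (metis atLeast_iff less_imp_le order_trans strict_mono_onD)

lemma f_nonneg: "0 \<le> x \<Longrightarrow> 0 \<le> f x"
  using f_le[of 0 x] f_zero by simp

lemma f_one_pos: "0 < f 1"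
  using f_less[of 0 1] f_zero by simp

definition F :: "real \<Rightarrow> real" where
  "F x = integral {0..x} f"

lemma F_diff: "0 \<le> a \<Longrightarrow> a \<le> b \<Longrightarrow> F b - F a = integral {a..b} f"
  using Henstock_Kurzweil_Integration.integral_combine[where a=0 and c=a and b=b and f=f]
    f_integrable[of 0 b]
  by (simp add: F_def)

lemma integral_lower: "0 \<le> a \<Longrightarrow> a \<le> b \<Longrightarrow> (b - a) * f a \<le> integral {a..b} f"
proof -
  assume "0 \<le> a" "a \<le> b"
  then have "integral {a..b} (\<lambda>_. f a) \<le> integral {a..b} f"
    by (intro integral_le) (auto intro: f_integrable f_le)
  with \<open>a \<le> b\<close> show ?thesis by simp
qed

lemma integral_upper: "0 \<le> a \<Longrightarrow> a \<le> b \<Longrightarrow> integral {a..b} f \<le> (b - a) * f b"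
proof -
  assume "0 \<le> a" "a \<le> b"
  then have "integral {a..b} f \<le> integral {a..b} (\<lambda>_. f b)"
    by (intro integral_le) (auto intro: f_integrable f_le)
  with \<open>a \<le> b\<close> show ?thesis by simp
qed

lemma F_zero: "F 0 = 0"
  by (simp add: F_def)

lemma F_mono: "0 \<le> a \<Longrightarrow> a \<le> b \<Longrightarrow> F a \<le> F b"
  using F_diff[of a b] integral_lower[of a b] f_nonneg[of a] by (smt (verit) mult_nonneg_nonneg)

lemma F_nonneg: "0 \<le> a \<Longrightarrow> 0 \<le> F a"
  using F_mono[of 0 a] F_zero by simp

lemma F_coercive: "0 \<le> x \<Longrightarrow> (x - 1) * f 1 \<le> F x"
proof (cases "x \<le> 1")
  case True
  assume "0 \<le> x"
  then show ?thesis using True F_nonneg[of x] f_nonneg[of 1] by (smt (verit) mult_nonpos_nonneg)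
next
  case False
  then show ?thesis using F_diff[of 1 x] integral_lower[of 1 x] F_nonneg[of 1] by auto
qed

text \<open>Strict midpoint convexity of F: the increase of F on the upper half of [a, b]
  exceeds that on the lower half, because f is strictly larger there.\<close>

lemma F_midpoint_less:
  assumes "0 \<le> a" "a < b"
  shows "2 * F ((a + b) / 2) < F a + F b"
proof -
  define m where "m = (a + b) / 2"
  define c where "c = (m + b) / 2"
  have ord: "a \<le> m" "m < c" "c < b" using assms by (auto simp: m_def c_def)
  have "F b - F m = integral {m..c} f + integral {c..b} f"
    using F_diff[of m b] Henstock_Kurzweil_Integration.integral_combine[of m c b f]
      f_integrable[of m b] ord assms
    by auto
  moreover have "(c - m) * f m \<le> integral {m..c} f" using integral_lower[of m c] ord assms by auto
  moreover have "(b - c) * f c \<le> integral {c..b} f" using integral_lower[of c b] ord assms by auto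
  moreover have "(b - c) * f m < (b - c) * f c" using f_less[of m c] ord assms by auto
  moreover have "F m - F a \<le> (m - a) * f m"
    using F_diff[of a m] integral_upper[of a m] ord assms by auto
  moreover have "b - m = m - a" by (simp add: m_def field_simps)
  ultimately have "F m - F a < F b - F m"
    by (smt (verit) distrib_left left_diff_distrib)
  then show ?thesis by (simp add: m_def)
qed

lemma F_strictly_midpoint_convex:
  assumes "0 \<le> a" "0 \<le> b" "a \<noteq> b"
  shows "2 * F ((a + b) / 2) < F a + F b"
  using F_midpoint_less[of a b] F_midpoint_less[of b a] assms
  by (cases "a < b") (auto simp: add.commute)

lemma F_midpoint_convex:
  assumes "0 \<le> a" "0 \<le> b"
  shows "2 * F ((a + b) / 2) \<le> F a + F b"
  using F_strictly_midpoint_convex[OF assms] by (cases "a = b") auto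

lemma F_continuous: "continuous_on {0..M} F"
proof -
  have "continuous (at x within {0..M}) F" if "x \<in> {0..M}" for x
    unfolding F_def using that integral_has_vector_derivative[OF continuous_on_subset[OF f_cont]]
    by (meson atLeastAtMost_iff atLeast_iff has_vector_derivative_continuous subsetI)
  then show ?thesis using continuous_on_eq_continuous_within by blast
qed

lemma Lyap_eq: "Lyap f r = (\<Sum>n\<in>UNIV. F (r $ n))"
  by (simp add: Lyap_def F_def)

lemma Lyap_mono: "nonneg_vec r \<Longrightarrow> vle r s \<Longrightarrow> Lyap f r \<le> Lyap f s"
  unfolding Lyap_eq by (rule sum_mono) (auto simp: nonneg_vec_def vle_def intro: F_mono)

lemma Lyap_coercive:
  assumes "nonneg_vec r"
  shows "r $ n \<le> 1 + Lyap f r / f 1"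
proof -
  have "(r $ n - 1) * f 1 \<le> F (r $ n)" using F_coercive assms by (simp add: nonneg_vec_def)
  also have "\<dots> \<le> Lyap f r"
    unfolding Lyap_eq by (rule member_le_sum) (use assms in \<open>auto simp: nonneg_vec_def F_nonneg\<close>)
  finally have "r $ n - 1 \<le> Lyap f r / f 1"
    using f_one_pos by (simp add: pos_le_divide_eq mult.commute)
  then show ?thesis by simp
qed

lemma Lyap_continuous_on_box: "continuous_on (cbox 0 (\<chi> _. M)) (Lyap f)"
proof -
  have "continuous_on (cbox 0 (\<chi> _. M)) (\<lambda>r. \<Sum>n\<in>UNIV. F (r $ n))"
  proof (rule continuous_on_sum)
    fix n
    show "continuous_on (cbox 0 (\<chi> _. M)) (\<lambda>r. F (r $ n))"
      by (rule continuous_on_compose2[OF F_continuous[of M]])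
         (auto simp: mem_box_cart intro!: continuous_intros)
  qed
  then show ?thesis by (simp add: Lyap_eq[abs_def])
qed

lemma Lyap_strictly_midpoint_convex:
  assumes "nonneg_vec s" "nonneg_vec r" "s \<noteq> r"
  shows "2 * Lyap f (midpoint s r) < Lyap f s + Lyap f r"
proof -
  obtain i where i: "s $ i \<noteq> r $ i" using assms(3) by (auto simp: vec_eq_iff)
  have mid: "midpoint s r $ n = (s $ n + r $ n) / 2" for n
    by (simp add: midpoint_def field_simps)
  have "(\<Sum>n\<in>UNIV. 2 * F (midpoint s r $ n)) < (\<Sum>n\<in>UNIV. F (s $ n) + F (r $ n))"
  proof (rule sum_strict_mono_ex1)
    show "\<forall>n\<in>UNIV. 2 * F (midpoint s r $ n) \<le> F (s $ n) + F (r $ n)"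
      using F_midpoint_convex assms(1,2) by (auto simp: mid nonneg_vec_def)
    show "\<exists>n\<in>UNIV. 2 * F (midpoint s r $ n) < F (s $ n) + F (r $ n)"
      using F_strictly_midpoint_convex[of "s $ i" "r $ i"] assms(1,2) i
      by (auto simp: mid nonneg_vec_def)
  qed simp
  then show ?thesis by (simp add: Lyap_eq sum.distrib sum_distrib_left)
qed

text \<open>Existence of a minimiser: restrict to the compact set of points of C lying in a box
  that contains the sublevel set of q.\<close>

lemma Lyap_min_exists:
  fixes C :: "(real^'n) set"
  assumes closed: "closed C" and qC: "q \<in> C" and nonneg: "\<And>r. r \<in> C \<Longrightarrow> nonneg_vec r"
  shows "\<exists>r\<in>C. \<forall>r'\<in>C. Lyap f r \<le> Lyap f r'"
proof -
  define M where "M = 1 + Lyap f q / f 1"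
  define K where "K = C \<inter> cbox 0 (\<chi> _. M)"
  have qK: "q \<in> K"
    using qC nonneg[OF qC] Lyap_coercive[of q] by (auto simp: K_def M_def mem_box_cart nonneg_vec_def)
  have "compact K" unfolding K_def by (rule closed_Int_compact[OF closed compact_cbox])
  moreover have "continuous_on K (Lyap f)"
    by (rule continuous_on_subset[OF Lyap_continuous_on_box]) (auto simp: K_def)
  ultimately obtain r0 where r0: "r0 \<in> K" "\<forall>r\<in>K. Lyap f r0 \<le> Lyap f r"
    using continuous_attains_inf qK by blast
  have "Lyap f r0 \<le> Lyap f r" if rC: "r \<in> C" for r
  proof (cases "r \<in> K")
    case False
    have "\<not> (\<forall>n. r $ n \<le> M)"
      using False rC nonneg[OF rC] by (auto simp: K_def mem_box_cart nonneg_vec_def)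
    then obtain n where "M < r $ n" by (auto simp: not_le)
    then have "Lyap f q / f 1 < Lyap f r / f 1"
      using Lyap_coercive[OF nonneg[OF rC], of n] by (simp add: M_def)
    then have "Lyap f q < Lyap f r"
      using f_one_pos by (simp add: divide_less_cancel)
    then show ?thesis using r0 qK by force
  qed (use r0 in blast)
  then show ?thesis using r0 by (auto simp: K_def)
qed

text \<open>Uniqueness: two distinct minimisers would have a midpoint with smaller value.\<close>

lemma Lyap_min_unique:
  fixes C :: "(real^'n) set"
  assumes convex: "convex C" and nonneg: "\<And>r. r \<in> C \<Longrightarrow> nonneg_vec r"
    and s: "s \<in> C" "\<forall>r'\<in>C. Lyap f s \<le> Lyap f r'"
    and r: "r \<in> C" "\<forall>r'\<in>C. Lyap f r \<le> Lyap f r'"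
  shows "s = r"
proof (rule ccontr)
  assume "s \<noteq> r"
  then have "2 * Lyap f (midpoint s r) < Lyap f s + Lyap f r"
    using Lyap_strictly_midpoint_convex nonneg s r by blast
  moreover have "midpoint s r \<in> C"
    using convexD[OF convex s(1) r(1), of "1/2" "1/2"] by (simp add: midpoint_def scaleR_right_distrib)
  ultimately show False using s r by force
qed

lemma Lyap_min_ex1:
  fixes C :: "(real^'n) set"
  assumes "closed C" "convex C" "q \<in> C" "\<And>r. r \<in> C \<Longrightarrow> nonneg_vec r"
  shows "\<exists>!r. r \<in> C \<and> (\<forall>r'\<in>C. Lyap f r \<le> Lyap f r')"
  using Lyap_min_exists[of C q] Lyap_min_unique[of C] assms by blast

end

section \<open>The dual polyhedron and its extreme points\<close>

lemma inner_vec_sum: "(x::real^'n) \<bullet> y = (\<Sum>i\<in>UNIV. x $ i * y $ i)"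
  by (simp add: inner_vec_def)

lemma inner_mono_right_nonneg: "nonneg_vec (x::real^'n) \<Longrightarrow> vle y z \<Longrightarrow> x \<bullet> y \<le> x \<bullet> z"
  unfolding inner_vec_sum by (rule sum_mono) (auto simp: nonneg_vec_def vle_def intro: mult_left_mono)

lemma inner_mono_left_nonneg: "nonneg_vec (x::real^'n) \<Longrightarrow> vle y z \<Longrightarrow> y \<bullet> x \<le> z \<bullet> x"
  using inner_mono_right_nonneg[of x y z] by (simp add: inner_commute)

lemma component_le_inner: "nonneg_vec (x::real^'n) \<Longrightarrow> nonneg_vec y \<Longrightarrow> x $ n * y $ n \<le> x \<bullet> y"
  unfolding inner_vec_sum by (rule member_le_sum) (auto simp: nonneg_vec_def)

lemma Lam_nonneg: "lam \<in> Lam S \<Longrightarrow> nonneg_vec lam"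
  by (simp add: Lam_def)

text \<open>Points of the dual polyhedron satisfy xi.lam <= 1 on the capacity region,
  since lam is dominated by a convex combination of schedules.\<close>

lemma dualpoly_inner_Lam_le:
  assumes "\<xi> \<in> dualpoly S" "lam \<in> Lam S"
  shows "\<xi> \<bullet> lam \<le> 1"
proof -
  obtain \<sigma> where \<sigma>: "\<sigma> \<in> convex hull S" "vle lam \<sigma>" using assms(2) by (auto simp: Lam_def)
  have "convex hull S \<subseteq> {x. \<xi> \<bullet> x \<le> 1}"
    by (rule hull_minimal) (use assms(1) in \<open>auto simp: dualpoly_def convex_halfspace_le\<close>)
  then have "\<xi> \<bullet> \<sigma> \<le> 1" using \<sigma> by auto
  moreover have "\<xi> \<bullet> lam \<le> \<xi> \<bullet> \<sigma>"
    using inner_mono_right_nonneg[OF _ \<sigma>(2)] assms(1) by (auto simp: dualpoly_def)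
  ultimately show ?thesis by simp
qed

lemma Eset_dualpoly: "\<xi> \<in> Eset S \<Longrightarrow> \<xi> \<in> dualpoly S"
  by (simp add: Eset_def extreme_point_of_def)

text \<open>Coordinates on which every schedule vanishes; the dual polyhedron is unbounded in
  these directions.  Forcing them to zero gives a compact polytope.\<close>

definition null_coords :: "(real^'n) set \<Rightarrow> 'n set" where
  "null_coords S = {n. \<forall>\<pi>\<in>S. \<pi> $ n = 0}"

definition dualpoly_red :: "(real^'n) set \<Rightarrow> (real^'n) set" where
  "dualpoly_red S = {\<xi>. nonneg_vec \<xi> \<and> (\<forall>\<pi>\<in>S. \<xi> \<bullet> \<pi> \<le> 1) \<and> (\<forall>n\<in>null_coords S. \<xi> $ n = 0)}"

lemma dualpoly_red_subset: "dualpoly_red S \<subseteq> dualpoly S"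
  by (auto simp: dualpoly_red_def dualpoly_def)

text \<open>An extreme point vanishes on the null coordinates: otherwise it is the midpoint of
  the two points obtained by setting that coordinate to 0 and doubling it.\<close>

lemma Eset_null_coords:
  assumes "\<xi> \<in> Eset S" "n \<in> null_coords S"
  shows "\<xi> $ n = 0"
proof (rule ccontr)
  assume ne: "\<xi> $ n \<noteq> 0"
  have xd: "\<xi> \<in> dualpoly S" using assms(1) by (rule Eset_dualpoly)
  define a where "a = (\<chi> i. if i = n then 0 else \<xi> $ i)"
  define b where "b = (\<chi> i. if i = n then 2 * \<xi> $ i else \<xi> $ i)"
  have pos: "\<xi> $ n > 0" using ne xd by (auto simp: dualpoly_def nonneg_vec_def order_le_less)
  have same_inner: "c \<bullet> \<pi> = \<xi> \<bullet> \<pi>" if "\<pi> \<in> S" "c = a \<or> c = b" for \<pi> c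
    unfolding inner_vec_sum using that assms(2)
    by (intro sum.cong) (auto simp: a_def b_def null_coords_def split: if_splits)
  have "a \<in> dualpoly S" "b \<in> dualpoly S"
    using xd same_inner pos by (auto simp: dualpoly_def nonneg_vec_def a_def b_def)
  moreover have "a \<noteq> b" using pos by (auto simp: a_def b_def vec_eq_iff)
  moreover have "midpoint a b = \<xi>" by (auto simp: midpoint_def a_def b_def vec_eq_iff)
  ultimately show False using assms(1) midpoint_in_open_segment[of a b]
    unfolding Eset_def extreme_point_of_def by force
qed

text \<open>For the nontrivial
  inclusion: a segment of the dual polyhedron through a point vanishing on the null
  coordinates lies entirely in the reduced polytope, by nonnegativity.\<close>

lemma Eset_eq_extreme_red: "Eset S = {\<xi>. \<xi> extreme_point_of dualpoly_red S}"
proof (intro set_eqI iffI; clarsimp)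
  fix \<xi> assume e: "\<xi> \<in> Eset S"
  have "\<xi> \<in> dualpoly_red S"
    using Eset_dualpoly[OF e] Eset_null_coords[OF e] by (auto simp: dualpoly_red_def dualpoly_def)
  then show "\<xi> extreme_point_of dualpoly_red S"
    using e dualpoly_red_subset unfolding Eset_def extreme_point_of_def by blast
next
  fix \<xi> assume ext: "\<xi> extreme_point_of dualpoly_red S"
  have xP: "\<xi> \<in> dualpoly_red S" using ext by (simp add: extreme_point_of_def)
  have "\<xi> \<notin> open_segment a b" if ab: "a \<in> dualpoly S" "b \<in> dualpoly S" for a b
  proof
    assume seg: "\<xi> \<in> open_segment a b"
    then obtain u where u: "0 < u" "u < 1" "\<xi> = (1 - u) *\<^sub>R a + u *\<^sub>R b" by (auto simp: in_segment)
    have "a $ n = 0 \<and> b $ n = 0" if "n \<in> null_coords S" for n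
    proof -
      have "(1 - u) * a $ n + u * b $ n = 0" using xP that u by (auto simp: dualpoly_red_def)
      moreover have "a $ n \<ge> 0" "b $ n \<ge> 0" using ab by (auto simp: dualpoly_def nonneg_vec_def)
      ultimately show ?thesis using u
        by (smt (verit) mult_pos_pos mult_nonneg_nonneg mult_le_0_iff)
    qed
    then have "a \<in> dualpoly_red S" "b \<in> dualpoly_red S" using ab by (auto simp: dualpoly_red_def dualpoly_def)
    then show False using ext seg by (auto simp: extreme_point_of_def)
  qed
  moreover have "\<xi> \<in> dualpoly S" using xP dualpoly_red_subset by auto
  ultimately show "\<xi> \<in> Eset S" by (auto simp: Eset_def extreme_point_of_def)
qed

lemma dualpoly_red_halfspaces:
  "dualpoly_red S = (\<Inter>i\<in>UNIV. {x. (- axis i 1) \<bullet> x \<le> 0}) \<inter> (\<Inter>\<pi>\<in>S. {x. \<pi> \<bullet> x \<le> 1})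
      \<inter> (\<Inter>n\<in>null_coords S. {x. axis n 1 \<bullet> x = 0})"
  by (auto simp: dualpoly_red_def nonneg_vec_def inner_axis' inner_axis inner_commute)

lemma polyhedron_dualpoly_red: "finite S \<Longrightarrow> polyhedron (dualpoly_red S)"
  unfolding dualpoly_red_halfspaces
  by (intro polyhedron_Int polyhedron_Inter)
     (auto intro: polyhedron_halfspace_le polyhedron_halfspace_ge polyhedron_hyperplane)

lemma dualpoly_red_box:
  assumes fin: "finite S" and nn: "\<forall>\<pi>\<in>S. nonneg_vec \<pi>"
  shows "dualpoly_red S \<subseteq> cbox 0 (\<chi> n. real (card S) / (\<Sum>\<pi>\<in>S. \<pi> $ n))"
proof
  fix \<xi> assume x: "\<xi> \<in> dualpoly_red S"
  have xn: "nonneg_vec \<xi>" using x by (auto simp: dualpoly_red_def)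
  have "0 \<le> \<xi> $ n \<and> \<xi> $ n \<le> real (card S) / (\<Sum>\<pi>\<in>S. \<pi> $ n)" for n
  proof (cases "n \<in> null_coords S")
    case True
    then have "\<xi> $ n = 0" using x by (auto simp: dualpoly_red_def)
    moreover have "0 \<le> real (card S) / (\<Sum>\<pi>\<in>S. \<pi> $ n)"
      using nn by (auto simp: nonneg_vec_def intro!: divide_nonneg_nonneg sum_nonneg)
    ultimately show ?thesis by simp
  next
    case False
    then obtain \<pi> where p: "\<pi> \<in> S" "\<pi> $ n \<noteq> 0" by (auto simp: null_coords_def)
    have "\<pi> $ n \<le> (\<Sum>\<pi>\<in>S. \<pi> $ n)"
      by (rule member_le_sum) (use p nn fin in \<open>auto simp: nonneg_vec_def\<close>)
    moreover have "\<pi> $ n > 0" using p nn by (auto simp: nonneg_vec_def order_le_less)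
    ultimately have sum_pos: "(\<Sum>\<pi>\<in>S. \<pi> $ n) > 0" by simp
    have "\<xi> $ n * (\<Sum>\<pi>\<in>S. \<pi> $ n) = (\<Sum>\<pi>\<in>S. \<xi> $ n * \<pi> $ n)" by (simp add: sum_distrib_left)
    also have "\<dots> \<le> (\<Sum>\<pi>\<in>S. 1)"
    proof (rule sum_mono)
      fix \<pi> assume "\<pi> \<in> S"
      then have "\<xi> $ n * \<pi> $ n \<le> \<xi> \<bullet> \<pi>" "\<xi> \<bullet> \<pi> \<le> 1"
        using component_le_inner[OF xn] x nn by (auto simp: dualpoly_red_def)
      then show "\<xi> $ n * \<pi> $ n \<le> 1" by simp
    qed
    finally have "\<xi> $ n * (\<Sum>\<pi>\<in>S. \<pi> $ n) \<le> real (card S)" by simp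
    then show ?thesis using sum_pos xn by (simp add: pos_le_divide_eq nonneg_vec_def)
  qed
  then show "\<xi> \<in> cbox 0 (\<chi> n. real (card S) / (\<Sum>\<pi>\<in>S. \<pi> $ n))" by (simp add: mem_box_cart)
qed

lemma compact_dualpoly_red:
  assumes "finite S" "\<forall>\<pi>\<in>S. nonneg_vec \<pi>"
  shows "compact (dualpoly_red S)"
proof -
  have "dualpoly_red S = dualpoly_red S \<inter> cbox 0 (\<chi> n. real (card S) / (\<Sum>\<pi>\<in>S. \<pi> $ n))"
    using dualpoly_red_box[OF assms] by blast
  also have "compact \<dots>"
    by (rule closed_Int_compact[OF polyhedron_imp_closed[OF polyhedron_dualpoly_red[OF assms(1)]]
          compact_cbox])
  finally show ?thesis .
qed

lemma finite_Eset: "finite S \<Longrightarrow> finite (Eset S)"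
  unfolding Eset_eq_extreme_red by (rule finite_polyhedron_extreme_points[OF polyhedron_dualpoly_red])

text \<open>Key consequence of Krein-Milman: the constraints indexed by Xi+(lam) imply the
  constraint eta.r >= eta.q for every eta of the reduced polytope with eta.lam = 1.
  Write eta as a convex combination of extreme points v; as v.lam <= 1 and the
  combination has value 1, every v with positive weight satisfies v.lam = 1.\<close>

lemma dualpoly_red_constraint:
  assumes fin: "finite S" and nn: "\<forall>\<pi>\<in>S. nonneg_vec \<pi>" and lam: "lam \<in> Lam S"
    and eta: "\<eta> \<in> dualpoly_red S" "\<eta> \<bullet> lam = 1" and r: "plus_feasible S lam q r"
  shows "\<eta> \<bullet> q \<le> \<eta> \<bullet> r"
proof -
  have "\<eta> \<in> convex hull Eset S"
    using Krein_Milman_Minkowski[OF compact_dualpoly_red[OF fin nn]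
        polyhedron_imp_convex[OF polyhedron_dualpoly_red[OF fin]]] eta
    by (simp add: Eset_eq_extreme_red)
  then obtain T u where T: "finite T" "T \<subseteq> Eset S" "\<forall>x\<in>T. 0 \<le> u x"
     "sum u T = 1" "(\<Sum>v\<in>T. u v *\<^sub>R v) = \<eta>"
    unfolding convex_hull_explicit by blast
  have eta_inner: "\<eta> \<bullet> x = (\<Sum>v\<in>T. u v * (v \<bullet> x))" for x
    using T(5)[symmetric] by (simp add: inner_sum_left)
  have slack_nonneg: "\<forall>v\<in>T. 0 \<le> u v * (1 - v \<bullet> lam)"
    using T(2,3) dualpoly_inner_Lam_le[OF Eset_dualpoly lam] by auto
  have "(\<Sum>v\<in>T. u v * (1 - v \<bullet> lam)) = 0"
    using eta_inner[of lam] eta(2) T(4) by (simp add: right_diff_distrib sum_subtractf)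
  then have tight: "\<forall>v\<in>T. u v * (1 - v \<bullet> lam) = 0"
    using sum_nonneg_eq_0_iff[OF T(1), of "\<lambda>v. u v * (1 - v \<bullet> lam)"] slack_nonneg by auto
  have "u v * (v \<bullet> q) \<le> u v * (v \<bullet> r)" if "v \<in> T" for v
  proof (cases "u v = 0")
    case False
    then have "v \<in> Xi_plus S lam" using tight T(2) that by (auto simp: Xi_plus_def)
    then have "v \<bullet> q \<le> v \<bullet> r" using r by (auto simp: plus_feasible_def)
    then show ?thesis using T(3) that by (simp add: mult_left_mono)
  qed simp
  then show ?thesis unfolding eta_inner by (rule sum_mono)
qed

text \<open>Every extreme point is dominated by a maximal one: take a dominating extreme point
  with the largest coordinate sum (E is finite).\<close>

lemma Sstar_dominates:
  assumes fin: "finite S" and x: "\<xi> \<in> Eset S"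
  shows "\<exists>\<eta>\<in>Sstar S. vle \<xi> \<eta>"
proof -
  define D where "D = {\<eta>\<in>Eset S. vle \<xi> \<eta>}"
  define h where "h = (\<lambda>\<eta>::real^'a. \<Sum>i\<in>UNIV. \<eta> $ i)"
  have "finite D" using finite_Eset[OF fin] by (simp add: D_def)
  moreover have "\<xi> \<in> D" by (simp add: D_def x vle_def)
  ultimately have "Max (h ` D) \<in> h ` D" by (intro Max_in) auto
  then obtain \<eta> where e: "\<eta> \<in> D" "h \<eta> = Max (h ` D)" by auto
  have emax: "h \<eta>' \<le> h \<eta>" if "\<eta>' \<in> D" for \<eta>'
    using e \<open>finite D\<close> that by simp
  have "\<not> (vle \<eta> \<eta>' \<and> \<eta>' \<noteq> \<eta>)" if "\<eta>' \<in> Eset S" for \<eta>'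
  proof
    assume a: "vle \<eta> \<eta>' \<and> \<eta>' \<noteq> \<eta>"
    then have "\<eta>' \<in> D" using e that by (auto simp: D_def vle_def intro: order_trans)
    moreover have "h \<eta> < h \<eta>'"
      unfolding h_def
    proof (rule sum_strict_mono_ex1)
      obtain i where "\<eta>' $ i \<noteq> \<eta> $ i" using a by (auto simp: vec_eq_iff)
      then have "\<eta> $ i < \<eta>' $ i" using a by (auto simp: vle_def order_le_less)
      then show "\<exists>i\<in>UNIV. \<eta> $ i < \<eta>' $ i" by blast
    qed (use a in \<open>auto simp: vle_def\<close>)
    ultimately show False using emax by force
  qed
  then show ?thesis using e by (auto simp: Sstar_def D_def)
qed

lemma Xi_dominates:
  assumes fin: "finite S" and lam: "lam \<in> Lam S" and x: "\<xi> \<in> Eset S" "\<xi> \<bullet> lam = 1"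
  shows "\<exists>\<eta>\<in>Xi S lam. vle \<xi> \<eta>"
proof -
  obtain \<eta> where e: "\<eta> \<in> Sstar S" "vle \<xi> \<eta>" using Sstar_dominates[OF fin x(1)] by blast
  have "\<xi> \<bullet> lam \<le> \<eta> \<bullet> lam" using inner_mono_left_nonneg[OF Lam_nonneg[OF lam] e(2)] .
  moreover have "\<eta> \<bullet> lam \<le> 1"
    using dualpoly_inner_Lam_le[OF Eset_dualpoly lam] e(1) by (auto simp: Sstar_def)
  ultimately have "\<eta> \<in> Xi S lam" using e(1) x(2) by (simp add: Xi_def)
  then show ?thesis using e(2) by blast
qed

section \<open>Comparison of the two feasible sets\<close>

lemma dominating_agree_on_support:
  assumes lam: "nonneg_vec lam" and le: "vle \<xi> \<eta>" and eq: "\<xi> \<bullet> lam = 1" "\<eta> \<bullet> lam = 1"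
    and ne: "\<eta> $ i \<noteq> \<xi> $ i"
  shows "lam $ i = 0"
proof -
  have "(\<Sum>i\<in>UNIV. (\<eta> $ i - \<xi> $ i) * lam $ i) = 0"
    using eq by (simp add: inner_vec_sum left_diff_distrib sum_subtractf)
  moreover have "\<forall>i\<in>UNIV. 0 \<le> (\<eta> $ i - \<xi> $ i) * lam $ i"
    using le lam by (auto simp: vle_def nonneg_vec_def)
  ultimately have "(\<eta> $ i - \<xi> $ i) * lam $ i = 0"
    using sum_nonneg_eq_0_iff[of UNIV "\<lambda>i. (\<eta> $ i - \<xi> $ i) * lam $ i"] by auto
  then show ?thesis using ne by simp
qed

text \<open>Lift-feasibility implies plus-feasibility: a constraint xi of Xi+(lam) follows from
  that of a dominating eta in Xi(lam), since xi and eta differ only on coordinates where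
  lam = 0, where r <= q.\<close>

lemma lift_feasible_plus_feasible:
  assumes fin: "finite S" and lam: "lam \<in> Lam S" and r: "lift_feasible S lam q r"
  shows "plus_feasible S lam q r"
  unfolding plus_feasible_def
proof (intro conjI ballI)
  show "nonneg_vec r" using r by (simp add: lift_feasible_def)
  fix \<xi> assume "\<xi> \<in> Xi_plus S lam"
  then have xE: "\<xi> \<in> Eset S" "\<xi> \<bullet> lam = 1" by (auto simp: Xi_plus_def)
  obtain \<eta> where e: "\<eta> \<in> Xi S lam" "vle \<xi> \<eta>" using Xi_dominates[OF fin lam xE] by blast
  have e_lam: "\<eta> \<bullet> lam = 1" using e by (simp add: Xi_def)
  have "\<eta> $ i * r $ i - \<eta> $ i * q $ i \<le> \<xi> $ i * r $ i - \<xi> $ i * q $ i" for i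
  proof (cases "\<eta> $ i = \<xi> $ i")
    case False
    then have "lam $ i = 0"
      using dominating_agree_on_support[OF Lam_nonneg[OF lam] e(2) xE(2) e_lam] by blast
    then have "r $ i \<le> q $ i" using r by (simp add: lift_feasible_def)
    moreover have "\<xi> $ i \<le> \<eta> $ i" using e(2) by (simp add: vle_def)
    ultimately have "(\<eta> $ i - \<xi> $ i) * (r $ i - q $ i) \<le> 0" by (simp add: mult_nonneg_nonpos)
    then show ?thesis by (simp add: algebra_simps)
  qed simp
  then have "\<eta> \<bullet> r - \<eta> \<bullet> q \<le> \<xi> \<bullet> r - \<xi> \<bullet> q"
    unfolding inner_vec_sum sum_subtractf[symmetric] by (rule sum_mono)
  moreover have "\<eta> \<bullet> q \<le> \<eta> \<bullet> r" using e(1) r by (auto simp: lift_feasible_def)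
  ultimately show "\<xi> \<bullet> q \<le> \<xi> \<bullet> r" by simp
qed

lemma truncated_Eset_in_dualpoly_red:
  assumes nn: "\<forall>\<pi>\<in>S. nonneg_vec \<pi>" and x: "\<xi> \<in> Eset S"
  shows "(\<chi> n. if P n then 0 else \<xi> $ n) \<in> dualpoly_red S"
proof -
  define \<eta> where "\<eta> = (\<chi> n. if P n then 0 else \<xi> $ n)"
  have xd: "\<xi> \<in> dualpoly S" using Eset_dualpoly[OF x] .
  then have le: "vle \<eta> \<xi>" by (auto simp: \<eta>_def vle_def dualpoly_def nonneg_vec_def)
  have "\<eta> \<bullet> \<pi> \<le> 1" if "\<pi> \<in> S" for \<pi>
    using inner_mono_left_nonneg[OF _ le, of \<pi>] nn xd that by (force simp: dualpoly_def)
  moreover have "nonneg_vec \<eta>" using xd by (auto simp: \<eta>_def dualpoly_def nonneg_vec_def)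
  moreover have "\<eta> $ n = 0" if "n \<in> null_coords S" for n
    using Eset_null_coords[OF x that] by (simp add: \<eta>_def)
  ultimately show ?thesis by (simp add: dualpoly_red_def \<eta>_def[symmetric])
qed

definition clip :: "real^'n \<Rightarrow> real^'n \<Rightarrow> real^'n \<Rightarrow> real^'n" where
  "clip lam q r = (\<chi> n. if lam $ n = 0 then min (r $ n) (q $ n) else r $ n)"

lemma clip_le: "vle (clip lam q r) r"
  by (simp add: vle_def clip_def)

text \<open>For xi in Xi(lam), the
  constraint for the clipped point is the plus-constraint of the truncation of xi that
  drops the clipped coordinates, which holds by the Krein-Milman argument.\<close>

lemma clip_lift_feasible:
  assumes fin: "finite S" and nn: "\<forall>\<pi>\<in>S. nonneg_vec \<pi>" and lam: "lam \<in> Lam S"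
    and q: "nonneg_vec q" and r: "plus_feasible S lam q r"
  shows "lift_feasible S lam q (clip lam q r)"
proof -
  have "\<xi> \<bullet> q \<le> \<xi> \<bullet> clip lam q r" if x: "\<xi> \<in> Xi S lam" for \<xi>
  proof -
    have xE: "\<xi> \<in> Eset S" "\<xi> \<bullet> lam = 1" using x by (auto simp: Xi_def Sstar_def)
    define \<eta> where "\<eta> = (\<chi> n. if lam $ n = 0 \<and> q $ n < r $ n then 0 else \<xi> $ n)"
    have "\<eta> \<in> dualpoly_red S"
      unfolding \<eta>_def by (rule truncated_Eset_in_dualpoly_red[OF nn xE(1)])
    moreover have "\<eta> \<bullet> lam = \<xi> \<bullet> lam"
      unfolding inner_vec_sum by (rule sum.cong) (auto simp: \<eta>_def)
    ultimately have "\<eta> \<bullet> q \<le> \<eta> \<bullet> r" using dualpoly_red_constraint[OF fin nn lam _ _ r] xE(2) by simp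
    moreover have "\<xi> \<bullet> clip lam q r - \<xi> \<bullet> q = \<eta> \<bullet> r - \<eta> \<bullet> q"
      unfolding inner_vec_sum sum_subtractf[symmetric]
      by (rule sum.cong) (auto simp: \<eta>_def clip_def)
    ultimately show ?thesis by simp
  qed
  moreover have "nonneg_vec r" using r by (simp add: plus_feasible_def)
  ultimately show ?thesis
    using q by (auto simp: lift_feasible_def clip_def nonneg_vec_def)
qed

lemma closed_convex_plus_feasible:
  "closed {r. plus_feasible S lam q r}" "convex {r. plus_feasible S lam q r}"
proof -
  have e: "{r. plus_feasible S lam q r} =
      (\<Inter>i. {r. axis i 1 \<bullet> r \<ge> 0}) \<inter> (\<Inter>\<xi>\<in>Xi_plus S lam. {r. \<xi> \<bullet> r \<ge> \<xi> \<bullet> q})"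
    by (auto simp: plus_feasible_def nonneg_vec_def inner_axis')
  show "closed {r. plus_feasible S lam q r}" unfolding e
    by (intro closed_Int closed_INT ballI closed_halfspace_ge)
  show "convex {r. plus_feasible S lam q r}" unfolding e
    by (intro convex_Int convex_INT ballI convex_halfspace_ge)
qed

section \<open>The two optimisation problems have the same solution\<close>

context increasing_rate
begin

lemma plus_optimal_ex1:
  assumes "nonneg_vec q"
  shows "\<exists>!r. plus_optimal f S lam q r"
proof -
  have "\<exists>!r. r \<in> {r. plus_feasible S lam q r} \<and>
      (\<forall>r'\<in>{r. plus_feasible S lam q r}. Lyap f r \<le> Lyap f r')"
    by (rule Lyap_min_ex1[OF closed_convex_plus_feasible])
       (use assms in \<open>auto simp: plus_feasible_def\<close>)
  then show ?thesis by (simp add: plus_optimal_def)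
qed

text \<open>The plus-optimum is lift-feasible: its clipping is plus-feasible and not larger,
  hence also optimal, hence equal to it.\<close>

lemma plus_optimal_lift_feasible:
  assumes fin: "finite S" and nonneg: "\<forall>\<pi>\<in>S. nonneg_vec \<pi>" and lam: "lam \<in> Lam S"
    and q: "nonneg_vec q" and opt: "plus_optimal f S lam q r"
  shows "lift_feasible S lam q r"
proof -
  have r: "plus_feasible S lam q r" using opt by (simp add: plus_optimal_def)
  have clip_lift: "lift_feasible S lam q (clip lam q r)"
    using clip_lift_feasible[OF fin nonneg lam q r] .
  then have clip_plus: "plus_feasible S lam q (clip lam q r)"
    using lift_feasible_plus_feasible[OF fin lam] by blast
  have "Lyap f (clip lam q r) \<le> Lyap f r"
    using Lyap_mono[OF _ clip_le[of lam q r]] clip_plus by (simp add: plus_feasible_def)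
  then have "plus_optimal f S lam q (clip lam q r)"
    using clip_plus opt by (force simp: plus_optimal_def)
  then have "clip lam q r = r" using opt plus_optimal_ex1[OF q] by blast
  then show ?thesis using clip_lift by simp
qed

text \<open>A lift-feasible plus-optimum solves the lift problem, whose feasible set is smaller;
  any other lift-optimum would also be plus-optimal, so Delta is well defined and equal to it.\<close>

lemma Delta_eq_plus_optimum:
  assumes fin: "finite S" and lam: "lam \<in> Lam S" and q: "nonneg_vec q"
    and opt: "plus_optimal f S lam q r" and lift: "lift_feasible S lam q r"
  shows "Delta f S lam q = r"
  unfolding Delta_def
proof (rule the_equality)
  show "lift_feasible S lam q r \<and> (\<forall>r'. lift_feasible S lam q r' \<longrightarrow> Lyap f r \<le> Lyap f r')"
    using lift opt lift_feasible_plus_feasible[OF fin lam] by (auto simp: plus_optimal_def)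
next
  fix r' assume "lift_feasible S lam q r' \<and> (\<forall>r''. lift_feasible S lam q r'' \<longrightarrow> Lyap f r' \<le> Lyap f r'')"
  then have "plus_optimal f S lam q r'"
    using lift opt lift_feasible_plus_feasible[OF fin lam] by (force simp: plus_optimal_def)
  then show "r' = r" using opt plus_optimal_ex1[OF q] by blast
qed

end

theorem lemma5p6:
  fixes S :: "(real^'n) set" and f :: "real \<Rightarrow> real" and lam q :: "real^'n"
  assumes S_fin: "finite S"
    and S_nonneg: "\<forall>\<pi>\<in>S. nonneg_vec \<pi>"
    and f_diff: "\<forall>x\<ge>0. f differentiable (at x within {0..})"
    and f_mono: "strict_mono_on {0..} f"
    and f0: "f 0 = 0"
    and lam: "lam \<in> Lam S"
    and q: "nonneg_vec q"
  shows "(\<exists>!r. plus_optimal f S lam q r) \<and> plus_optimal f S lam q (Delta f S lam q)"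
proof -
  have "continuous_on {0..} f"
    using f_diff differentiable_imp_continuous_within continuous_on_eq_continuous_within
    by (metis atLeast_iff)
  then interpret increasing_rate f using f_mono f0 by unfold_locales
  obtain r where r: "plus_optimal f S lam q r" using plus_optimal_ex1[OF q] by blast
  have "lift_feasible S lam q r" using plus_optimal_lift_feasible[OF S_fin S_nonneg lam q r] .
  then have "Delta f S lam q = r" using Delta_eq_plus_optimum[OF S_fin lam q r] by blast
  then show ?thesis using plus_optimal_ex1[OF q] r by simp
qed

end
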